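(* Let $X$ be a finite simplicial complex, $d\ge 0$, and let $F^{\uparrow}:C_{d+1}(X)\to C_{d+1}(X)$ and $F^{\downarrow}:C_{d-1}(X)\to C_{d-1}(X)$ be smooth. Let $G_d(\theta)=B_d^\intercal F^{\downarrow}(B_d\theta)+B_{d+1}F^{\uparrow}(B_{d+1}^\intercal\theta)$ on $C_d(X)$. Then $G_d$ is exact if and only if the maps $P_{d+1}F^{\uparrow}P_{d+1}$ and $Q_{d-1}F^{\downarrow}Q_{d-1}$ are exact.
   Context: A finite simplicial complex $X$ on vertex set $\{1,\dots,n\}$ is a collection of nonempty subsets closed under taking nonempty subsets; $X_d$ is the set of simplices with $d+1$ vertices; a $d$-simplex with vertices $i_0<\dots<i_d$ is written $[i_0,\dots,i_d]$. $C_d(X)$ is the real vector space with basis $X_d$ and inner product making $X_d$ orthonormal ($C_{-1}(X)=0$). The boundary map is $\partial_d[i_0,\dots,i_d]=\sum_{k=0}^d(-1)^k[i_0,\dots,\widehat{i_k},\dots,i_d]$ with matrix $B_d$; $B_d^\intercal$ its transpose. $P_{d+1}$ is the orthogonal projection of $C_{d+1}(X)$ onto $\operatorname{im}(B_{d+1}^\intercal)$, and $Q_{d-1}$ is the orthogonal projection of $C_{d-1}(X)$ onto $\operatorname{im}(B_d)$. A vector field $F$ on a real inner product space $V$ is exact if $F=\nabla\phi$ for some smooth function $\phi:V\to\mathbb{R}$. *)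

theory Defs
  imports "HOL-Analysis.Analysis"
begin

text \<open>All chain spaces live inside the Euclidean space real^('v set), whose standard basis
  vectors are indexed by the finite subsets of vertices; C_d(X) is the coordinate subspace
  spanned by the d-simplices of X (so the standard inner product makes X_d orthonormal).\<close>

definition simplicial_complex :: "'v set set \<Rightarrow> bool" where
  "simplicial_complex X \<longleftrightarrow>
     (\<forall>s\<in>X. s \<noteq> {}) \<and> (\<forall>s\<in>X. \<forall>t. t \<subseteq> s \<and> t \<noteq> {} \<longrightarrow> t \<in> X)"

text \<open>X_d : simplices with d+1 vertices (d an integer; X_{-1} is empty).\<close>
definition simplices :: "'v set set \<Rightarrow> int \<Rightarrow> 'v set set" where
  "simplices X d = {s \<in> X. int (card s) = d + 1}"

definition chains :: "('v::finite) set set \<Rightarrow> int \<Rightarrow> (real ^ ('v set)) set" where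
  "chains X d = {c. \<forall>s. c $ s \<noteq> 0 \<longrightarrow> s \<in> simplices X d}"

text \<open>Incidence coefficient of the (d-1)-simplex t in the boundary of the d-simplex s:
  if s = [i_0,...,i_d] and t omits i_k then (-1)^k, where k = number of vertices of s below i_k.\<close>
definition incidence :: "('v::linorder) set set \<Rightarrow> int \<Rightarrow> 'v set \<Rightarrow> 'v set \<Rightarrow> real" where
  "incidence X d t s =
     (if s \<in> simplices X d \<and> t \<in> simplices X (d - 1) \<and> t \<subseteq> s \<and> card (s - t) = 1
      then (-1) ^ card {w \<in> s. w < the_elem (s - t)} else 0)"

definition bmat :: "('v::{finite,linorder}) set set \<Rightarrow> int \<Rightarrow> real ^ ('v set) ^ ('v set)" where
  "bmat X d = (\<chi> t s. incidence X d t s)"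

definition orth_proj :: "('a::real_inner) set \<Rightarrow> 'a \<Rightarrow> 'a" where
  "orth_proj W x = (THE y. y \<in> W \<and> (\<forall>w\<in>W. inner (x - y) w = 0))"

fun dd :: "('a::real_normed_vector) list \<Rightarrow> ('a \<Rightarrow> 'b::real_normed_vector) \<Rightarrow> 'a \<Rightarrow> 'b" where
  "dd [] f = f"
| "dd (v # vs) f = (\<lambda>x. vector_derivative (\<lambda>t. dd vs f (x + t *\<^sub>R v)) (at 0))"

definition smooth_on :: "('a::real_normed_vector) set \<Rightarrow> ('a \<Rightarrow> 'b::real_normed_vector) \<Rightarrow> bool" where
  "smooth_on V f \<longleftrightarrow>
     (\<forall>vs. set vs \<subseteq> V \<longrightarrow>
        continuous_on V (dd vs f) \<and>
        (\<forall>v\<in>V. \<forall>x\<in>V. (\<lambda>t. dd vs f (x + t *\<^sub>R v)) differentiable (at (0::real))))"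

definition exact_on :: "('a::real_inner) set \<Rightarrow> ('a \<Rightarrow> 'a) \<Rightarrow> bool" where
  "exact_on V F \<longleftrightarrow>
     (\<exists>\<phi> :: 'a \<Rightarrow> real. smooth_on V \<phi> \<and>
        (\<forall>x\<in>V. F x \<in> V \<and> (\<phi> has_derivative (\<lambda>h. inner (F x) h)) (at x within V)))"

end

theory Submission
  imports Defs
begin

text \<open>Write \<open>B = B\<^sub>d\<close> and \<open>C = B\<^sub>d\<^sub>+\<^sub>1\<close>, so that \<open>B C = 0\<close>. If \<open>\<psi>\<^sub>\<down>\<close> and \<open>\<psi>\<^sub>\<up>\<close> are potentials
  of \<open>Q F\<^sub>\<down> Q\<close> and \<open>P F\<^sub>\<up> P\<close>, then \<open>\<theta> \<mapsto> \<psi>\<^sub>\<down>(B \<theta>) + \<psi>\<^sub>\<up>(C\<^sup>T \<theta>)\<close> is a potential of \<open>G\<^sub>d\<close>, since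
  \<open>Q\<close> and \<open>P\<close> fix the images of \<open>B\<close> and \<open>C\<^sup>T\<close>. Conversely, if \<open>\<phi>\<close> is a potential of \<open>G\<^sub>d\<close> and \<open>M\<close>
  is the Moore-Penrose pseudoinverse of \<open>C\<^sup>T\<close>, then \<open>C\<^sup>T M = P\<close> and \<open>M\<close> takes values in
  \<open>im C \<subseteq> ker B\<close>, so the \<open>F\<^sub>\<down>\<close>-term of \<open>G\<^sub>d\<close> drops out and \<open>\<phi> \<circ> M\<close> is a potential of \<open>P F\<^sub>\<up> P\<close>;
  symmetrically for \<open>Q F\<^sub>\<down> Q\<close>.\<close>

lemma orth_proj_eqI:
  fixes W :: "'a::real_inner set"
  assumes "subspace W" "y \<in> W" "\<forall>w\<in>W. inner (x - y) w = 0"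
  shows "orth_proj W x = y"
  unfolding orth_proj_def
proof (rule the_equality)
  show "y \<in> W \<and> (\<forall>w\<in>W. inner (x - y) w = 0)" using assms(2,3) by blast
next
  fix y' assume y': "y' \<in> W \<and> (\<forall>w\<in>W. inner (x - y') w = 0)"
  have "y' - y \<in> W" using assms(1,2) y' by (simp add: subspace_diff)
  then have "inner (y' - y) (y' - y) = inner (x - y) (y' - y) - inner (x - y') (y' - y)"
    by (simp add: inner_diff_left)
  also have "\<dots> = 0" using \<open>y' - y \<in> W\<close> assms(3) y' by simp
  finally show "y' = y" by simp
qed

lemma orth_proj_in_orthogonal:
  fixes W :: "'a::euclidean_space set"
  assumes "subspace W"
  shows "orth_proj W x \<in> W \<and> (\<forall>w\<in>W. inner (x - orth_proj W x) w = 0)"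
proof -
  have "span W = W" using assms by (rule span_eq_iff[THEN iffD2])
  then obtain y z where "y \<in> W" "\<And>w. w \<in> W \<Longrightarrow> orthogonal z w" "x = y + z"
    using orthogonal_subspace_decomp_exists by metis
  then show ?thesis using orth_proj_eqI[OF assms] by (simp add: orthogonal_def)
qed

lemma orth_proj_in:
  fixes W :: "'a::euclidean_space set"
  shows "subspace W \<Longrightarrow> orth_proj W x \<in> W"
  using orth_proj_in_orthogonal by blast

lemma orth_proj_orthogonal:
  fixes W :: "'a::euclidean_space set"
  shows "subspace W \<Longrightarrow> w \<in> W \<Longrightarrow> inner (x - orth_proj W x) w = 0"
  using orth_proj_in_orthogonal by blast

lemma orth_proj_fixed:
  fixes W :: "'a::real_inner set"
  shows "subspace W \<Longrightarrow> x \<in> W \<Longrightarrow> orth_proj W x = x"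
  by (simp add: orth_proj_eqI)

lemma linear_orth_proj:
  fixes W :: "'a::euclidean_space set"
  assumes W: "subspace W"
  shows "linear (orth_proj W)"
proof
  fix x y :: 'a and c :: real
  have orth: "\<And>z w. w \<in> W \<Longrightarrow> inner (orth_proj W z) w = inner z w"
    by (metis W orth_proj_orthogonal inner_diff_left right_minus_eq)
  show "orth_proj W (x + y) = orth_proj W x + orth_proj W y"
    by (rule orth_proj_eqI[OF W])
      (simp_all add: subspace_add W orth_proj_in inner_diff_left inner_add_left orth)
  show "orth_proj W (c *\<^sub>R x) = c *\<^sub>R orth_proj W x"
    by (rule orth_proj_eqI[OF W])
      (simp_all add: subspace_scale W orth_proj_in inner_diff_left orth)
qed

lemma orth_proj_self_adjoint:
  fixes W :: "'a::euclidean_space set"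
  assumes W: "subspace W"
  shows "inner (orth_proj W x) y = inner x (orth_proj W y)"
proof -
  have "inner (y - orth_proj W y) (orth_proj W x) = 0"
    by (simp add: W orth_proj_in orth_proj_orthogonal)
  then have "inner (orth_proj W x) y = inner (orth_proj W x) (orth_proj W y)"
    by (metis inner_diff_left inner_commute right_minus_eq)
  also have "inner (x - orth_proj W x) (orth_proj W y) = 0"
    by (simp add: W orth_proj_in orth_proj_orthogonal)
  then have "inner (orth_proj W x) (orth_proj W y) = inner x (orth_proj W y)"
    by (simp add: inner_diff_left)
  finally show ?thesis .
qed

lemma inner_transpose_mult: "inner (transpose A *v x) y = inner x (A *v (y::real^'n))"
  by (simp add: dot_lmul_matrix)

lemma image_matrix_vector_mult_eq_range:
  fixes A :: "real^'n^'m"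
  assumes "range (\<lambda>y. transpose A *v y) \<subseteq> S"
  shows "(\<lambda>x. A *v x) ` S = range (\<lambda>x. A *v x)"
proof (intro subset_antisym subsetI)
  let ?U = "range (\<lambda>y. transpose A *v y)"
  have U: "subspace ?U" by (rule linear_subspace_image[OF matrix_vector_mul_linear subspace_UNIV])
  fix z assume "z \<in> range (\<lambda>x. A *v x)"
  then obtain x where z: "z = A *v x" by blast
  let ?u = "orth_proj ?U x"
  have "inner (A *v (x - ?u)) (A *v (x - ?u)) = inner (x - ?u) (transpose A *v (A *v (x - ?u)))"
    by (simp only: inner_commute[of "x - ?u"] inner_transpose_mult)
  also have "\<dots> = 0"
    using orth_proj_orthogonal[OF U] by blast
  finally have "A *v (x - ?u) = 0"
    by (simp only: inner_eq_zero_iff)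
  then have "z = A *v ?u"
    by (simp add: z matrix_vector_mult_diff_distrib)
  then show "z \<in> (\<lambda>x. A *v x) ` S"
    using assms orth_proj_in[OF U] by blast
qed blast

lemma inj_on_matrix_vector_mult_range_transpose:
  fixes A :: "real^'n^'m"
  shows "inj_on (\<lambda>x. A *v x) (range (\<lambda>y. transpose A *v y))"
proof (rule inj_onI)
  fix u v assume "u \<in> range (\<lambda>y. transpose A *v y)" "v \<in> range (\<lambda>y. transpose A *v y)"
    and eq: "A *v u = A *v v"
  then obtain y where y: "u - v = transpose A *v y"
    by (metis (no_types, lifting) matrix_vector_mult_diff_distrib rangeE)
  have "inner (u - v) (u - v) = inner y (A *v (u - v))"
    by (simp only: y inner_transpose_mult)
  also have "\<dots> = 0" using eq by (simp add: matrix_vector_mult_diff_distrib)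
  finally show "u = v" by simp
qed

lemma pseudoinverse_exists:
  fixes A :: "real^'n^'m"
  obtains M where "linear M" "\<And>y. A *v M y = orth_proj (range (\<lambda>x. A *v x)) y"
    "\<And>y. M y \<in> range (\<lambda>x. transpose A *v x)"
proof -
  let ?U = "range (\<lambda>x. transpose A *v x)" and ?R = "range (\<lambda>x. A *v x)"
  have U: "subspace ?U" and R: "subspace ?R"
    by (rule linear_subspace_image[OF matrix_vector_mul_linear subspace_UNIV])+
  have span_U: "span ?U = ?U" using U by (rule span_eq_iff[THEN iffD2])
  have "inj_on (\<lambda>x. A *v x) (span ?U)"
    unfolding span_U by (rule inj_on_matrix_vector_mult_range_transpose)
  from real_vector.linear_inj_on_left_inverse[OF matrix_vector_mul_linear[of A] this]
  obtain g where g: "range g \<subseteq> ?U" "linear g" "\<forall>u\<in>?U. g (A *v u) = u"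
    unfolding span_U by blast
  have "A *v g (orth_proj ?R y) = orth_proj ?R y" for y
  proof -
    have "orth_proj ?R y \<in> (\<lambda>x. A *v x) ` ?U"
      by (metis orth_proj_in[OF R] image_matrix_vector_mult_eq_range[OF order_refl])
    then obtain u where u: "u \<in> ?U" "orth_proj ?R y = A *v u" by blast
    then have "g (A *v u) = u" using g(3) by blast
    then show ?thesis by (simp only: u(2))
  qed
  moreover have "linear (\<lambda>y. g (orth_proj ?R y))"
    using linear_compose[OF linear_orth_proj[OF R] g(2)] by (simp add: o_def)
  ultimately show thesis using that g(1) by blast
qed

lemma dd_compose_linear:
  assumes "subspace W" "linear L" "set vs \<subseteq> W" "x \<in> W"
  shows "dd vs (\<lambda>x. f (L x)) x = dd (map L vs) f (L x)"
  using assms(3,4)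
proof (induction vs arbitrary: x)
  case (Cons v vs)
  have "x + t *\<^sub>R v \<in> W" for t
    using Cons.prems assms(1) by (simp add: subspace_add subspace_scale)
  then show ?case
    using Cons assms(2) by (simp add: linear_add linear_scale)
qed simp

lemma smooth_on_compose_linear:
  fixes L :: "'a::euclidean_space \<Rightarrow> 'b::euclidean_space"
  assumes "subspace W" "linear L" "L ` W \<subseteq> V" "smooth_on V f"
  shows "smooth_on W (\<lambda>x. f (L x))"
  unfolding smooth_on_def
proof (intro allI impI conjI ballI)
  fix vs assume vs: "set vs \<subseteq> W"
  then have "set (map L vs) \<subseteq> V" using assms(3) by auto
  then have smooth: "continuous_on V (dd (map L vs) f)"
    "\<And>v x. v \<in> V \<Longrightarrow> x \<in> V \<Longrightarrow> (\<lambda>t. dd (map L vs) f (x + t *\<^sub>R v)) differentiable (at 0)"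
    using assms(4) unfolding smooth_on_def by auto
  have "continuous_on W L"
    using assms(2) by (simp add: linear_continuous_on linear_conv_bounded_linear)
  then have "continuous_on W (\<lambda>x. dd (map L vs) f (L x))"
    using continuous_on_compose2[OF smooth(1) _ assms(3)] by blast
  then show "continuous_on W (dd vs (\<lambda>x. f (L x)))"
    by (rule continuous_on_cong[THEN iffD1, rotated 2])
      (simp_all add: dd_compose_linear[OF assms(1,2) vs])
  fix v x assume "v \<in> W" "x \<in> W"
  have "dd vs (\<lambda>x. f (L x)) (x + t *\<^sub>R v) = dd (map L vs) f (L x + t *\<^sub>R L v)" for t
  proof -
    have "x + t *\<^sub>R v \<in> W"
      using \<open>v \<in> W\<close> \<open>x \<in> W\<close> assms(1) by (simp add: subspace_add subspace_scale)
    then have "dd vs (\<lambda>x. f (L x)) (x + t *\<^sub>R v) = dd (map L vs) f (L (x + t *\<^sub>R v))"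
      by (rule dd_compose_linear[OF assms(1,2) vs])
    then show ?thesis using assms(2) by (simp add: linear_add linear_scale)
  qed
  moreover have "L x \<in> V" "L v \<in> V" using \<open>v \<in> W\<close> \<open>x \<in> W\<close> assms(3) by auto
  ultimately show "(\<lambda>t. dd vs (\<lambda>x. f (L x)) (x + t *\<^sub>R v)) differentiable (at 0)"
    using smooth(2) by simp
qed

lemma dd_add:
  assumes "subspace W" "smooth_on W f" "smooth_on W g" "set vs \<subseteq> W" "x \<in> W"
  shows "dd vs (\<lambda>x. f x + g x) x = dd vs f x + dd vs g x"
  using assms(4,5)
proof (induction vs arbitrary: x)
  case (Cons v vs)
  have "x + t *\<^sub>R v \<in> W" for t
    using Cons.prems assms(1) by (simp add: subspace_add subspace_scale)
  moreover have "(\<lambda>t. dd vs f (x + t *\<^sub>R v)) differentiable (at 0)"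
    "(\<lambda>t. dd vs g (x + t *\<^sub>R v)) differentiable (at 0)"
    using assms(2,3) Cons.prems unfolding smooth_on_def by auto
  ultimately show ?case using Cons by simp
qed simp

lemma smooth_on_add:
  assumes "subspace W" "smooth_on W f" "smooth_on W g"
  shows "smooth_on W (\<lambda>x. f x + g x)"
  unfolding smooth_on_def
proof (intro allI impI conjI ballI)
  fix vs assume vs: "set vs \<subseteq> W"
  note dd_sum = dd_add[OF assms vs]
  have "continuous_on W (\<lambda>x. dd vs f x + dd vs g x)"
    using assms(2,3) vs unfolding smooth_on_def by (auto intro: continuous_on_add)
  then show "continuous_on W (dd vs (\<lambda>x. f x + g x))"
    by (rule continuous_on_cong[THEN iffD1, rotated 2]) (simp_all add: dd_sum)
  fix v x assume "v \<in> W" "x \<in> W"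
  then have "dd vs (\<lambda>x. f x + g x) (x + t *\<^sub>R v) = dd vs f (x + t *\<^sub>R v) + dd vs g (x + t *\<^sub>R v)"
    for t
    using assms(1) by (simp add: dd_sum subspace_add subspace_scale)
  moreover have "(\<lambda>t. dd vs f (x + t *\<^sub>R v)) differentiable (at 0)"
    "(\<lambda>t. dd vs g (x + t *\<^sub>R v)) differentiable (at 0)"
    using assms(2,3) vs \<open>v \<in> W\<close> \<open>x \<in> W\<close> unfolding smooth_on_def by auto
  ultimately show "(\<lambda>t. dd vs (\<lambda>x. f x + g x) (x + t *\<^sub>R v)) differentiable (at 0)"
    by (simp add: differentiable_add)
qed

lemma exact_on_pullback:
  fixes L :: "'a::euclidean_space \<Rightarrow> 'b::euclidean_space"
  assumes W: "subspace W" and L: "linear L" "L ` W \<subseteq> V" and F: "exact_on V F"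
    and G: "\<And>x. x \<in> W \<Longrightarrow> G x \<in> W"
      \<comment> \<open>all \<open>h\<close>, not only \<open>h \<in> W\<close>: a derivative within \<open>W\<close> is still a map on the whole space\<close>
      "\<And>x h. x \<in> W \<Longrightarrow> inner (F (L x)) (L h) = inner (G x) h"
  shows "exact_on W G"
proof -
  obtain \<phi> where \<phi>: "smooth_on V \<phi>"
    "\<And>y. y \<in> V \<Longrightarrow> (\<phi> has_derivative (\<lambda>h. inner (F y) h)) (at y within V)"
    using F unfolding exact_on_def by blast
  have "((\<lambda>x. \<phi> (L x)) has_derivative (\<lambda>h. inner (G x) h)) (at x within W)" if "x \<in> W" for x
    using has_derivative_in_compose2[OF \<phi>(2) L(2) that linear_imp_has_derivative[OF L(1)]]
    by (simp add: G(2)[OF that])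
  then show ?thesis
    unfolding exact_on_def using smooth_on_compose_linear[OF W L \<phi>(1)] G(1) by blast
qed

lemma exact_on_add:
  assumes W: "subspace W" and "exact_on W F" "exact_on W G"
  shows "exact_on W (\<lambda>x. F x + G x)"
proof -
  obtain \<phi> \<psi> where smooth: "smooth_on W \<phi>" "smooth_on W \<psi>"
    and F: "\<And>x. x \<in> W \<Longrightarrow> F x \<in> W \<and> (\<phi> has_derivative (\<lambda>h. inner (F x) h)) (at x within W)"
    and G: "\<And>x. x \<in> W \<Longrightarrow> G x \<in> W \<and> (\<psi> has_derivative (\<lambda>h. inner (G x) h)) (at x within W)"
    using assms(2,3) unfolding exact_on_def by metis
  have "((\<lambda>y. \<phi> y + \<psi> y) has_derivative (\<lambda>h. inner (F x + G x) h)) (at x within W)"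
    if "x \<in> W" for x
    using has_derivative_add[OF F[OF that, THEN conjunct2] G[OF that, THEN conjunct2]]
    by (simp add: inner_add_left)
  then show ?thesis
    unfolding exact_on_def using smooth_on_add[OF W smooth] F G W subspace_add by blast
qed

lemma exact_on_congruence:
  fixes A :: "real^'n^'m"
  assumes V: "subspace V"
    and A: "range (\<lambda>x. A *v x) \<subseteq> U" "range (\<lambda>y. transpose A *v y) \<subseteq> V"
    and F: "exact_on U (\<lambda>y. orth_proj ((\<lambda>x. A *v x) ` V) (F (orth_proj ((\<lambda>x. A *v x) ` V) y)))"
  shows "exact_on V (\<lambda>x. transpose A *v F (A *v x))"
proof (rule exact_on_pullback[OF V matrix_vector_mul_linear _ F])
  let ?W = "(\<lambda>x. A *v x) ` V"
  have W: "subspace ?W" by (rule linear_subspace_image[OF matrix_vector_mul_linear V])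
  have fixed: "orth_proj ?W (A *v y) = A *v y" for y
    using orth_proj_fixed[OF W] image_matrix_vector_mult_eq_range[OF A(2)] by blast
  show "?W \<subseteq> U" using A(1) by blast
  fix x h
  show "transpose A *v F (A *v x) \<in> V" using A(2) by blast
  show "inner (orth_proj ?W (F (orth_proj ?W (A *v x)))) (A *v h) = inner (transpose A *v F (A *v x)) h"
    by (simp only: orth_proj_self_adjoint[OF W] fixed inner_transpose_mult)
qed

lemma exact_on_projected_congruence:
  fixes A :: "real^'n^'m"
  assumes U: "subspace U"
    and A: "range (\<lambda>x. A *v x) \<subseteq> U" "range (\<lambda>y. transpose A *v y) \<subseteq> V"
    and G: "exact_on V (\<lambda>x. transpose A *v F (A *v x) + R x)"
    and R: "\<And>y z. inner (R (transpose A *v y)) (transpose A *v z) = 0"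
  shows "exact_on U (\<lambda>y. orth_proj ((\<lambda>x. A *v x) ` V) (F (orth_proj ((\<lambda>x. A *v x) ` V) y)))"
proof -
  let ?W = "range (\<lambda>x. A *v x)"
  have W: "subspace ?W" by (rule linear_subspace_image[OF matrix_vector_mul_linear subspace_UNIV])
  obtain M where M: "linear M" "\<And>y. A *v M y = orth_proj ?W y"
    "\<And>y. M y \<in> range (\<lambda>x. transpose A *v x)"
    using pseudoinverse_exists[of A] by blast
  show ?thesis
    unfolding image_matrix_vector_mult_eq_range[OF A(2)]
  proof (rule exact_on_pullback[OF U M(1) _ G])
    show "M ` U \<subseteq> V" using M(3) A(2) by blast
    fix y h
    show "orth_proj ?W (F (orth_proj ?W y)) \<in> U"
      using orth_proj_in[OF W] A(1) by blast
    obtain z z' where z: "M y = transpose A *v z" and z': "M h = transpose A *v z'"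
      using M(3) by blast
    have "inner (R (M y)) (M h) = 0" using R z z' by simp
    then have "inner (transpose A *v F (A *v M y) + R (M y)) (M h)
        = inner (F (orth_proj ?W y)) (A *v M h)"
      by (simp only: inner_add_left inner_transpose_mult M(2) add_0_right)
    also have "\<dots> = inner (orth_proj ?W (F (orth_proj ?W y))) h"
      by (simp only: M(2) orth_proj_self_adjoint[OF W])
    finally show "inner (transpose A *v F (A *v M y) + R (M y)) (M h)
        = inner (orth_proj ?W (F (orth_proj ?W y))) h" .
  qed
qed

lemma subspace_chains: "subspace (chains X d)"
  unfolding subspace_def chains_def by (auto; metis add.right_neutral)

lemma range_bmat_subset: "range (\<lambda>x. bmat X d *v x) \<subseteq> chains X (d - 1)"
  by (auto simp: chains_def matrix_vector_mult_def bmat_def incidence_def intro!: sum.neutral)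

lemma range_transpose_bmat_subset: "range (\<lambda>x. transpose (bmat X d) *v x) \<subseteq> chains X d"
  by (auto simp: chains_def vector_matrix_mult_def bmat_def incidence_def intro!: sum.neutral)

lemma incidence_nonzeroD:
  assumes "incidence X d t s \<noteq> 0"
  shows "s \<in> simplices X d \<and> t \<in> simplices X (d - 1) \<and> (\<exists>x\<in>s. t = s - {x})"
proof -
  have "s \<in> simplices X d" "t \<in> simplices X (d - 1)" "t \<subseteq> s" "card (s - t) = 1"
    using assms by (auto simp: incidence_def split: if_splits)
  moreover from this obtain x where "s - t = {x}" by (auto simp: card_1_singleton_iff)
  ultimately show ?thesis by blast
qed

lemma incidence_remove_vertex:
  assumes "s \<in> simplices X d" "s - {x} \<in> simplices X (d - 1)" "x \<in> s"
  shows "incidence X d (s - {x}) s = (-1) ^ card {w \<in> s. w < x}"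
proof -
  have "s - (s - {x}) = {x}" using assms(3) by blast
  then show ?thesis using assms by (simp add: incidence_def)
qed

lemma simplices_remove_vertex:
  assumes X: "simplicial_complex X" and s: "s \<in> simplices X d" and "d \<ge> 1" "x \<in> s"
  shows "s - {x} \<in> simplices X (d - 1)"
proof -
  have "s \<in> X" "int (card s) = d + 1" using s by (auto simp: simplices_def)
  then have "finite s" "card s \<ge> 1" using \<open>d \<ge> 1\<close> by (auto intro: card_ge_0_finite)
  then have "int (card (s - {x})) = d"
    using \<open>x \<in> s\<close> \<open>int (card s) = d + 1\<close> by (simp add: of_nat_diff)
  then have "0 < card (s - {x})" using \<open>d \<ge> 1\<close> by linarith
  then have "s - {x} \<noteq> {}" by (rule card_gt_0_iff[THEN iffD1, THEN conjunct1])
  moreover have "\<forall>t. t \<subseteq> s \<and> t \<noteq> {} \<longrightarrow> t \<in> X"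
    using X \<open>s \<in> X\<close> unfolding simplicial_complex_def by blast
  then have "s - {x} \<in> X" using \<open>s - {x} \<noteq> {}\<close> by blast
  ultimately show ?thesis using \<open>int (card (s - {x})) = d\<close> by (simp add: simplices_def)
qed

lemma boundary_signs_cancel:
  fixes s :: "'v::linorder set"
  assumes "finite s" "a \<in> s" "b \<in> s" "a \<noteq> b"
  shows "(-1) ^ card {w \<in> s - {a}. w < b} * (-1) ^ card {w \<in> s. w < a}
       + (-1) ^ card {w \<in> s - {b}. w < a} * (-1) ^ card {w \<in> s. w < b} = (0::real)"
proof -
  have cancel: "(-1) ^ card {w \<in> s - {a}. w < b} * (-1) ^ card {w \<in> s. w < a}
       + (-1) ^ card {w \<in> s - {b}. w < a} * (-1) ^ card {w \<in> s. w < b} = (0::real)"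
    if "a \<in> s" "a < b" for a b
  proof -
    have "a \<in> {w \<in> s. w < b}" using that by blast
    then have "0 < card {w \<in> s. w < b}" using \<open>finite s\<close> by (auto simp: card_gt_0_iff)
    then obtain k where k: "card {w \<in> s. w < b} = Suc k" using gr0_conv_Suc by blast
    have "{w \<in> s - {a}. w < b} = {w \<in> s. w < b} - {a}" by blast
    then have "card {w \<in> s - {a}. w < b} = k"
      using k \<open>a \<in> {w \<in> s. w < b}\<close> by simp
    moreover have "{w \<in> s - {b}. w < a} = {w \<in> s. w < a}" using \<open>a < b\<close> by auto
    ultimately show ?thesis using k by simp
  qed
  show ?thesis
    using assms(2-4) cancel[of a b] cancel[of b a] by (cases "a < b") (auto simp: add.commute)
qed

lemma boundary_boundary_pair:
  fixes X :: "'v::linorder set set"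
  assumes X: "simplicial_complex X" and "d \<ge> 0"
    and s: "s \<in> simplices X (d + 1)" and r: "s - {a} - {b} \<in> simplices X (d - 1)"
    and ab: "a \<in> s" "b \<in> s" "a \<noteq> b"
  shows "incidence X d (s - {a} - {b}) (s - {a}) * incidence X (d + 1) (s - {a}) s
       + incidence X d (s - {a} - {b}) (s - {b}) * incidence X (d + 1) (s - {b}) s = 0"
proof -
  have faces: "s - {a} \<in> simplices X d" "s - {b} \<in> simplices X d"
    using simplices_remove_vertex[OF X s] ab \<open>d \<ge> 0\<close> by simp_all
  have "int (card s) = d + 2" using s by (simp add: simplices_def)
  then have "finite s" using \<open>d \<ge> 0\<close> by (intro card_ge_0_finite) linarith
  have "incidence X (d + 1) (s - {a}) s = (-1) ^ card {w \<in> s. w < a}"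
    and "incidence X (d + 1) (s - {b}) s = (-1) ^ card {w \<in> s. w < b}"
    using incidence_remove_vertex[OF s] faces ab by simp_all
  moreover have "incidence X d (s - {a} - {b}) (s - {a}) = (-1) ^ card {w \<in> s - {a}. w < b}"
    by (rule incidence_remove_vertex[OF faces(1) r]) (use ab in blast)
  moreover have "s - {a} - {b} = s - {b} - {a}" by blast
  then have "incidence X d (s - {a} - {b}) (s - {b}) = (-1) ^ card {w \<in> s - {b}. w < a}"
    using incidence_remove_vertex[OF faces(2), of a] r ab by simp
  ultimately show ?thesis
    by (simp only: boundary_signs_cancel[OF \<open>finite s\<close> ab])
qed

lemma boundary_boundary_coeff:
  fixes X :: "('v::{finite,linorder}) set set"
  assumes X: "simplicial_complex X" and "d \<ge> 0"
  shows "(\<Sum>t\<in>UNIV. incidence X d r t * incidence X (d + 1) t s) = 0"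
proof (cases "\<forall>t. incidence X d r t * incidence X (d + 1) t s = 0")
  case False
  let ?f = "\<lambda>t. incidence X d r t * incidence X (d + 1) t s"
  from False obtain t0 where "incidence X d r t0 \<noteq> 0" "incidence X (d + 1) t0 s \<noteq> 0" by auto
  from incidence_nonzeroD[OF this(2)] incidence_nonzeroD[OF this(1)]
  obtain a b where s: "s \<in> simplices X (d + 1)" and r: "r \<in> simplices X (d - 1)"
    and ab: "a \<in> s" "b \<in> s" "a \<noteq> b" and r_eq: "r = s - {a} - {b}"
    by auto
  have "?f t = 0" if "t \<notin> {s - {a}, s - {b}}" for t
  proof (rule ccontr)
    assume "?f t \<noteq> 0"
    then obtain x y where "x \<in> s" "t = s - {x}" "r = t - {y}"
      using incidence_nonzeroD[of X d r t] incidence_nonzeroD[of X "d + 1" t s] by auto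
    then have "x = a \<or> x = b" using r_eq by blast
    then show False using that \<open>t = s - {x}\<close> by blast
  qed
  moreover have "s - {a} \<noteq> s - {b}" using ab by blast
  ultimately have "(\<Sum>t\<in>UNIV. ?f t) = ?f (s - {a}) + ?f (s - {b})"
    using sum.mono_neutral_right[of UNIV "{s - {a}, s - {b}}" ?f] by simp
  also have "\<dots> = 0"
    using boundary_boundary_pair[OF X \<open>d \<ge> 0\<close> s _ ab] r unfolding r_eq by blast
  finally show ?thesis .
qed (auto intro: sum.neutral)

lemma bmat_mult_bmat_eq_0:
  fixes X :: "('v::{finite,linorder}) set set"
  shows "simplicial_complex X \<Longrightarrow> d \<ge> 0 \<Longrightarrow> bmat X d ** bmat X (d + 1) = 0"
  by (simp add: matrix_matrix_mult_def bmat_def vec_eq_iff boundary_boundary_coeff)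

theorem mainTheorem6:
  fixes X :: "('v::{finite,linorder}) set set"
    and d :: int
    and Fup Fdown :: "real ^ ('v set) \<Rightarrow> real ^ ('v set)"
  assumes "simplicial_complex X"
    and "d \<ge> 0"
    and "\<forall>x\<in>chains X (d + 1). Fup x \<in> chains X (d + 1)"
    and "smooth_on (chains X (d + 1)) Fup"
    and "\<forall>x\<in>chains X (d - 1). Fdown x \<in> chains X (d - 1)"
    and "smooth_on (chains X (d - 1)) Fdown"
  shows "exact_on (chains X d)
           (\<lambda>\<theta>. transpose (bmat X d) *v Fdown (bmat X d *v \<theta>)
               + bmat X (d + 1) *v Fup (transpose (bmat X (d + 1)) *v \<theta>))
         \<longleftrightarrow>
         exact_on (chains X (d + 1))
           (\<lambda>x. orth_proj ((\<lambda>\<theta>. transpose (bmat X (d + 1)) *v \<theta>) ` chains X d)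
                  (Fup (orth_proj ((\<lambda>\<theta>. transpose (bmat X (d + 1)) *v \<theta>) ` chains X d) x)))
         \<and> exact_on (chains X (d - 1))
           (\<lambda>x. orth_proj ((\<lambda>\<theta>. bmat X d *v \<theta>) ` chains X d)
                  (Fdown (orth_proj ((\<lambda>\<theta>. bmat X d *v \<theta>) ` chains X d) x)))"
proof -
  let ?B = "bmat X d" and ?C = "bmat X (d + 1)"
  let ?P = "orth_proj ((\<lambda>\<theta>. transpose ?C *v \<theta>) ` chains X d)"
    and ?Q = "orth_proj ((\<lambda>\<theta>. ?B *v \<theta>) ` chains X d)"
  have BC: "?B ** ?C = 0" by (rule bmat_mult_bmat_eq_0[OF assms(1,2)])
  have range_C: "range (\<lambda>x. transpose (transpose ?C) *v x) \<subseteq> chains X d"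
    using range_bmat_subset[of X "d + 1"] by simp
  note ranges = range_bmat_subset[of X d] range_transpose_bmat_subset[of X d]
    range_transpose_bmat_subset[of X "d + 1"] range_C
  have down_vanishes: "inner (transpose ?B *v Fdown (?B *v (transpose (transpose ?C) *v y)))
      (transpose (transpose ?C) *v z) = 0" for y z
    by (simp only: transpose_transpose inner_transpose_mult matrix_vector_mul_assoc BC
        matrix_vector_mult_0 inner_zero_right)
  have up_vanishes: "inner (?C *v Fup (transpose ?C *v (transpose ?B *v y))) (transpose ?B *v z) = 0"
    for y z
    by (simp only: inner_commute[of "?C *v _"] inner_transpose_mult matrix_vector_mul_assoc BC
        matrix_vector_mult_0 inner_zero_right)
  show ?thesis
  proof (intro iffI conjI)
    assume G: "exact_on (chains X d)
      (\<lambda>\<theta>. transpose ?B *v Fdown (?B *v \<theta>) + ?C *v Fup (transpose ?C *v \<theta>))"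
    then have "exact_on (chains X d)
      (\<lambda>\<theta>. transpose (transpose ?C) *v Fup (transpose ?C *v \<theta>) + transpose ?B *v Fdown (?B *v \<theta>))"
      by (simp only: transpose_transpose add.commute)
    from exact_on_projected_congruence[OF subspace_chains ranges(3,4) this down_vanishes]
    show "exact_on (chains X (d + 1)) (\<lambda>x. ?P (Fup (?P x)))" .
    from exact_on_projected_congruence[OF subspace_chains ranges(1,2) G up_vanishes]
    show "exact_on (chains X (d - 1)) (\<lambda>x. ?Q (Fdown (?Q x)))" .
  next
    assume "exact_on (chains X (d + 1)) (\<lambda>x. ?P (Fup (?P x)))
      \<and> exact_on (chains X (d - 1)) (\<lambda>x. ?Q (Fdown (?Q x)))"
    then have "exact_on (chains X d) (\<lambda>\<theta>. transpose (transpose ?C) *v Fup (transpose ?C *v \<theta>))"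
      and "exact_on (chains X d) (\<lambda>\<theta>. transpose ?B *v Fdown (?B *v \<theta>))"
      using exact_on_congruence[OF subspace_chains ranges(3,4)]
        exact_on_congruence[OF subspace_chains ranges(1,2)] by blast+
    then show "exact_on (chains X d)
      (\<lambda>\<theta>. transpose ?B *v Fdown (?B *v \<theta>) + ?C *v Fup (transpose ?C *v \<theta>))"
      using exact_on_add[OF subspace_chains] unfolding transpose_transpose by blast
  qed
qed

end
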